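(* For every positive integer $s$, $$\sum_{n=1}^\infty\frac{(-1)^n}{n^s\,2^n\binom{2n}{n}}\in\mathsf{CMZV}^2_s.$$
   Context: For positive integers $s_1,\dots,s_k$ and complex $a_j$, $L_{s_1,\dots,s_k}(a_1,\dots,a_k)=\sum_{n_1>\cdots>n_k\ge1}\frac{a_1^{n_1}\cdots a_k^{n_k}}{n_1^{s_1}\cdots n_k^{s_k}}$. For integers $N\ge1$, $W\ge1$, $\mathsf{CMZV}^N_W$ is the $\mathbb{Q}$-linear span of all $L_{s_1,\dots,s_k}(a_1,\dots,a_k)$ with $k\ge1$, $s_1+\cdots+s_k=W$, each $a_j$ an $N$-th root of unity, and $(s_1,a_1)\ne(1,1)$. *)

theory Defs
  imports Complex_Main
begin

text \<open>A multiple polylogarithm datum is a list [(s1,a1),...,(sk,ak)].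
  MPL_part xs m is the finite nested sum over m > n1 > n2 > ... > nk >= 1.\<close>

fun MPL_part :: "(nat \<times> complex) list \<Rightarrow> nat \<Rightarrow> complex" where
  "MPL_part [] m = 1"
| "MPL_part ((s, a) # xs) m =
     (\<Sum>n\<in>{1..<m}. a ^ n / (of_nat n) ^ s * MPL_part xs n)"

text \<open>L_{s1,...,sk}(a1,...,ak): the limit of the partial sums of the outer series
  (truncating n1 < M), i.e. the series sum_{n1>...>nk>=1} in its natural ordering.\<close>

definition MPL :: "(nat \<times> complex) list \<Rightarrow> complex" where
  "MPL xs = lim (\<lambda>M. MPL_part xs M)"

definition CMZV_generators :: "nat \<Rightarrow> nat \<Rightarrow> complex set" where
  "CMZV_generators N W =
     {MPL xs | xs. xs \<noteq> [] \<and> sum_list (map fst xs) = W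
        \<and> (\<forall>p\<in>set xs. fst p \<ge> 1 \<and> snd p ^ N = 1)
        \<and> hd xs \<noteq> (1, 1)}"

definition CMZV :: "nat \<Rightarrow> nat \<Rightarrow> complex set" where
  "CMZV N W =
     {x. \<exists>S c. finite S \<and> S \<subseteq> CMZV_generators N W
        \<and> x = (\<Sum>g\<in>S. of_real (of_rat (c g)) * g)}"

end

theory Submission
  imports Defs "HOL-Analysis.Analysis" "HOL-Real_Asymp.Real_Asymp"
begin

text \<open>With \<open>h s u = (\<Sum>n\<ge>1. u ^ n / (n ^ s * (2n choose n)))\<close> the series is \<open>h s (-1/2)\<close>.
  The substitution \<open>u = -x^2 / (1 + x)\<close> sends \<open>x = 1\<close> to \<open>u = -1/2\<close>, and \<open>G s x = h s u\<close>
  satisfies \<open>G (s + 1)' = (2 / x - 1 / (1 + x)) G s\<close>. The recurrence of the central binomial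
  coefficients turns into a first-order differential equation for \<open>h 1\<close>, which gives
  \<open>G 1 x = -x ln (1 + x) / (2 + x)\<close>. One-variable multiple polylogarithms with signs \<open>\<plusminus>1\<close> are
  closed under both integrations needed: \<open>x d/dx\<close> lowers the first exponent, and
  \<open>(1 + x) d/dx\<close> removes a leading \<open>(1, -1)\<close>. Starting from \<open>G 2' = -ln (1 + x) / (1 + x)\<close>,
  every \<open>G s\<close> with \<open>s \<ge> 2\<close> is therefore a rational combination of such polylogarithms of
  weight \<open>s\<close>, and Abel's limit theorem evaluates it at \<open>x = 1\<close> as a combination of alternating
  multiple zeta values. For \<open>s = 1\<close> the value is \<open>G 1 1 = -ln 2 / 3 = L\<^sub>1(-1) / 3\<close>.
  Below, \<open>h\<close> is \<open>central_series\<close>, \<open>G\<close> is \<open>central_pullback\<close>, and the one-variable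
  polylogarithms are \<open>mpl_series\<close>.\<close>

section \<open>Power series and Abel's limit theorem\<close>

lemma sums_powser_shift:
  fixes g :: "nat \<Rightarrow> 'a :: real_normed_field"
  assumes "(\<lambda>n. g n * x ^ n) sums S"
  shows "(\<lambda>n. (if n = 0 then 0 else g (n - 1)) * x ^ n) sums (x * S)"
proof -
  have "(\<lambda>n. x * (g n * x ^ n)) sums (x * S)"
    by (rule sums_mult[OF assms])
  then have "(\<lambda>n. (if Suc n = 0 then 0 else g (Suc n - 1)) * x ^ Suc n) sums (x * S)"
    by (simp add: algebra_simps)
  then show ?thesis
    by (subst (asm) sums_Suc_iff) simp
qed

lemma tendsto_one_minus_mult_powser_null:
  fixes r :: "nat \<Rightarrow> real"
  assumes "r \<longlonglongrightarrow> 0"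
  shows "((\<lambda>x. (1 - x) * (\<Sum>n. r n * x ^ n)) \<longlongrightarrow> 0) (at_left 1)"
proof (rule tendstoI)
  fix e :: real
  assume "e > 0"
  then obtain N where N: "\<And>n. n \<ge> N \<Longrightarrow> \<bar>r n\<bar> < e / 2"
    using LIMSEQ_D[OF assms, of "e / 2"] by auto
  define R where "R = (\<Sum>n<N. \<bar>r n\<bar>)"
  have "((\<lambda>x. (1 - x) * R) \<longlongrightarrow> (1 - 1) * R) (at_left (1::real))"
    by (intro tendsto_intros)
  then have "eventually (\<lambda>x. (1 - x) * R < e / 2) (at_left (1::real))"
    by (rule order_tendstoD(2)) (use \<open>e > 0\<close> in simp)
  moreover have "eventually (\<lambda>x. x \<in> {0<..<1}) (at_left (1::real))"
    by (rule eventually_at_left_real) simp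
  ultimately show "eventually (\<lambda>x. dist ((1 - x) * (\<Sum>n. r n * x ^ n)) 0 < e) (at_left 1)"
  proof eventually_elim
    case (elim x)
    then have x: "0 < x" "x < 1" by auto
    define b where "b n = (if n \<in> {..<N} then \<bar>r n\<bar> else 0) + e / 2 * x ^ n" for n
    have b_sums: "b sums (R + e / 2 * (1 / (1 - x)))"
      unfolding b_def R_def using x
      by (intro sums_add sums_If_finite_set sums_mult geometric_sums) auto
    have bound: "norm (r n * x ^ n) \<le> b n" for n
    proof (cases "n < N")
      case True
      have "\<bar>r n\<bar> * x ^ n \<le> \<bar>r n\<bar>"
        using x by (intro mult_left_le power_le_one) auto
      moreover have "0 \<le> e / 2 * x ^ n"
        using \<open>e > 0\<close> x by simp
      ultimately show ?thesis
        using True x by (simp add: b_def abs_mult)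
    next
      case False
      then show ?thesis
        using N[of n] x by (simp add: b_def abs_mult mult_right_mono)
    qed
    have "\<bar>\<Sum>n. r n * x ^ n\<bar> \<le> R + e / 2 * (1 / (1 - x))"
      using norm_suminf_le[OF bound sums_summable[OF b_sums]] sums_unique[OF b_sums] by simp
    then have "(1 - x) * \<bar>\<Sum>n. r n * x ^ n\<bar> \<le> (1 - x) * (R + e / 2 * (1 / (1 - x)))"
      using x by (intro mult_left_mono) auto
    also have "\<dots> = (1 - x) * R + e / 2"
      using x by (simp add: field_simps)
    finally show ?case
      using elim x by (simp add: dist_real_def abs_mult)
  qed
qed

lemma summable_powser_bounded:
  fixes c :: "nat \<Rightarrow> real"
  assumes "\<And>n. \<bar>c n\<bar> \<le> C" "\<bar>x\<bar> < 1"
  shows "summable (\<lambda>n. c n * x ^ n)"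
proof (rule summable_comparison_test')
  show "summable (\<lambda>n. C * \<bar>x\<bar> ^ n)"
    using assms(2) by (intro summable_mult summable_geometric) simp
  show "norm (c n * x ^ n) \<le> C * \<bar>x\<bar> ^ n" for n
    using assms(1)[of n] by (simp add: abs_mult power_abs mult_right_mono)
qed

lemma powser_eq_suminf_plus_remainder:
  fixes c :: "nat \<Rightarrow> real"
  assumes "summable c" "\<bar>x\<bar> < 1"
  shows "(\<Sum>n. c n * x ^ n) = suminf c + (1 - x) * (\<Sum>n. ((\<Sum>k\<le>n. c k) - suminf c) * x ^ n)"
proof -
  define A where "A = suminf c"
  define r where "r n = (\<Sum>k\<le>n. c k) - A" for n
  have "(\<lambda>n. \<Sum>k<Suc n. c k) \<longlonglongrightarrow> A"
    unfolding A_def using LIMSEQ_Suc[OF summable_LIMSEQ[OF assms(1)]] .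
  then have "r \<longlonglongrightarrow> 0"
    unfolding r_def lessThan_Suc_atMost by (rule LIM_zero)
  then obtain M where "\<And>n. \<bar>r n\<bar> \<le> M"
    using convergent_imp_Bseq[OF convergentI] by (force elim: BseqE)
  then have r_sums: "(\<lambda>n. r n * x ^ n) sums (\<Sum>n. r n * x ^ n)"
    using assms(2) by (intro summable_sums summable_powser_bounded)
  \<comment> \<open>\<open>c\<close> is the difference sequence of the remainders \<open>r\<close>, up to the constant term\<close>
  have c_eq: "c n * x ^ n = r n * x ^ n - (if n = 0 then 0 else r (n - 1)) * x ^ n
      + (if n = 0 then A else 0)" for n
    by (cases n) (simp_all add: r_def algebra_simps)
  have "(\<lambda>n. r n * x ^ n - (if n = 0 then 0 else r (n - 1)) * x ^ n + (if n = 0 then A else 0))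
      sums ((\<Sum>n. r n * x ^ n) - x * (\<Sum>n. r n * x ^ n) + A)"
    using sums_single[of 0 "\<lambda>_. A"]
    by (intro sums_add sums_diff r_sums sums_powser_shift) simp_all
  then have "(\<lambda>n. c n * x ^ n) sums ((\<Sum>n. r n * x ^ n) - x * (\<Sum>n. r n * x ^ n) + A)"
    by (simp only: c_eq)
  then show ?thesis
    unfolding A_def[symmetric] r_def[symmetric] by (simp add: sums_iff algebra_simps)
qed

theorem Abel_limit_theorem:
  fixes c :: "nat \<Rightarrow> real"
  assumes "summable c"
  shows "((\<lambda>x. \<Sum>n. c n * x ^ n) \<longlongrightarrow> suminf c) (at_left 1)"
proof -
  define r where "r n = (\<Sum>k\<le>n. c k) - suminf c" for n
  have "(\<lambda>n. \<Sum>k<Suc n. c k) \<longlonglongrightarrow> suminf c"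
    using LIMSEQ_Suc[OF summable_LIMSEQ[OF assms]] .
  then have "r \<longlonglongrightarrow> 0"
    unfolding r_def lessThan_Suc_atMost by (rule LIM_zero)
  then have "((\<lambda>x. suminf c + (1 - x) * (\<Sum>n. r n * x ^ n)) \<longlongrightarrow> suminf c + 0) (at_left 1)"
    by (intro tendsto_add tendsto_const tendsto_one_minus_mult_powser_null)
  moreover have "eventually (\<lambda>x. x \<in> {0<..<1}) (at_left (1::real))"
    by (rule eventually_at_left_real) simp
  then have "eventually (\<lambda>x. suminf c + (1 - x) * (\<Sum>n. r n * x ^ n) = (\<Sum>n. c n * x ^ n))
      (at_left 1)"
    by eventually_elim (simp add: r_def powser_eq_suminf_plus_remainder[OF assms])
  ultimately show ?thesis
    by (auto intro: Lim_transform_eventually)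
qed

lemma summable_alternating_bounded_variation:
  fixes b :: "nat \<Rightarrow> real"
  assumes b_null: "b \<longlonglongrightarrow> 0" and bv: "summable (\<lambda>n. \<bar>b (Suc n) - b n\<bar>)"
  shows "summable (\<lambda>n. (-1) ^ n * b n)"
proof -
  define E :: "nat \<Rightarrow> real" where "E n = of_bool (odd n)" for n
  have E_bound: "\<bar>E n\<bar> \<le> 1" for n
    by (simp add: E_def)
  \<comment> \<open>summation by parts, with \<open>E n = (\<Sum>k<n. (-1) ^ k)\<close>\<close>
  have parts: "(\<Sum>n<N. (-1) ^ n * b n) = E N * b N - (\<Sum>n<N. E (Suc n) * (b (Suc n) - b n))" for N
    by (induction N) (auto simp: E_def algebra_simps)
  have "summable (\<lambda>n. E (Suc n) * (b (Suc n) - b n))"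
    by (rule summable_comparison_test'[OF bv])
      (use E_bound in \<open>simp add: abs_mult mult_left_le_one_le\<close>)
  moreover have "(\<lambda>N. E N * b N) \<longlonglongrightarrow> 0"
    by (rule Lim_null_comparison[OF _ tendsto_rabs_zero[OF b_null]])
      (use E_bound in \<open>simp add: abs_mult mult_left_le_one_le\<close>)
  ultimately have "(\<lambda>N. E N * b N - (\<Sum>n<N. E (Suc n) * (b (Suc n) - b n)))
      \<longlonglongrightarrow> 0 - (\<Sum>n. E (Suc n) * (b (Suc n) - b n))"
    by (intro tendsto_diff summable_LIMSEQ)
  then show ?thesis
    unfolding summable_def sums_def parts by blast
qed

lemma same_DERIV_imp_eq:
  fixes f g :: "real \<Rightarrow> real"
  assumes "a \<le> b" "continuous_on {a..b} f" "continuous_on {a..b} g"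
    and "\<And>x. a < x \<Longrightarrow> x < b \<Longrightarrow> (f has_field_derivative d x) (at x)"
    and "\<And>x. a < x \<Longrightarrow> x < b \<Longrightarrow> (g has_field_derivative d x) (at x)"
    and "f a = g a"
  shows "f b = g b"
proof (cases "a = b")
  case False
  have "(\<lambda>x. f x - g x) b = (\<lambda>x. f x - g x) a"
  proof (rule DERIV_isconst2[of a b])
    fix x assume "a < x" "x < b"
    then show "((\<lambda>x. f x - g x) has_field_derivative 0) (at x)"
      using DERIV_diff[OF assms(4,5)] by simp
  qed (use assms False in \<open>auto intro: continuous_on_diff\<close>)
  then show ?thesis
    using assms(6) by simp
qed (use assms in simp)

lemma isCont_eq_tendsto_at_left:
  fixes f g :: "real \<Rightarrow> real"
  assumes "isCont f b" "(g \<longlongrightarrow> L) (at_left b)" "eventually (\<lambda>x. f x = g x) (at_left b)"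
  shows "f b = L"
proof -
  have "(f \<longlongrightarrow> f b) (at_left b)"
    using assms(1) unfolding isCont_def by (rule tendsto_within_subset) simp
  moreover have "(f \<longlongrightarrow> L) (at_left b)"
    by (rule Lim_transform_eventually[OF assms(2)]) (use assms(3) in \<open>auto elim: eventually_mono\<close>)
  ultimately show ?thesis
    by (rule tendsto_unique[OF trivial_limit_at_left_real])
qed

lemma powser_Suc_eq_divide:
  fixes c :: "nat \<Rightarrow> 'a :: real_normed_field"
  assumes "c 0 = 0" "summable (\<lambda>n. c n * x ^ n)" "x \<noteq> 0"
  shows "(\<Sum>n. c (Suc n) * x ^ n) = (\<Sum>n. c n * x ^ n) / x"
proof -
  have "(\<lambda>n. c (Suc n) * x ^ Suc n) sums (\<Sum>n. c n * x ^ n)"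
    using summable_sums[OF assms(2)] assms(1) by (subst sums_Suc_iff) simp
  then have "(\<lambda>n. c (Suc n) * x ^ Suc n / x) sums ((\<Sum>n. c n * x ^ n) / x)"
    by (rule sums_divide)
  then show ?thesis
    using assms(3) by (simp add: sums_iff)
qed

section \<open>Nested sums with signs \<open>\<plusminus>1\<close>\<close>

type_synonym mpl_index = "(nat \<times> real) list"

fun MPL_part_real :: "mpl_index \<Rightarrow> nat \<Rightarrow> real" where
  "MPL_part_real [] m = 1"
| "MPL_part_real ((s, a) # w) m = (\<Sum>n\<in>{1..<m}. a ^ n / real n ^ s * MPL_part_real w n)"

fun MPL_term :: "mpl_index \<Rightarrow> nat \<Rightarrow> real" where
  "MPL_term [] n = 0"
| "MPL_term ((s, a) # w) n = a ^ n / real n ^ s * MPL_part_real w n"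

definition signed_index :: "mpl_index \<Rightarrow> bool" where
  "signed_index w \<longleftrightarrow> (\<forall>(s, a)\<in>set w. s \<ge> 1 \<and> (a = 1 \<or> a = -1))"

lemma signed_index_simps [simp]:
  "signed_index []"
  "signed_index ((s, a) # w) \<longleftrightarrow> s \<ge> 1 \<and> (a = 1 \<or> a = -1) \<and> signed_index w"
  by (auto simp: signed_index_def)

definition admissible_index :: "mpl_index \<Rightarrow> bool" where
  "admissible_index w \<longleftrightarrow> signed_index w \<and> w \<noteq> [] \<and> hd w \<noteq> (1, 1)"

lemma MPL_term_0: "signed_index w \<Longrightarrow> MPL_term w 0 = 0"
  by (cases w) auto

lemma MPL_part_real_eq_sum:
  assumes "signed_index w" "w \<noteq> []"
  shows "MPL_part_real w m = (\<Sum>n<m. MPL_term w n)"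
proof -
  obtain s a r where w: "w = (s, a) # r"
    using assms(2) by (metis list.exhaust surj_pair)
  have "(\<Sum>n<m. MPL_term w n) = (\<Sum>n\<in>{1..<m}. MPL_term w n)"
    using MPL_term_0[OF assms(1)] by (intro sum.mono_neutral_right) (auto simp: Suc_le_eq)
  then show ?thesis
    using w by simp
qed

lemma MPL_part_real_Suc:
  "signed_index w \<Longrightarrow> MPL_part_real w (Suc m) = MPL_part_real w m + MPL_term w m"
  by (cases "w = []") (simp_all add: MPL_part_real_eq_sum)

lemma abs_MPL_term_Cons:
  "a = 1 \<or> a = -1 \<Longrightarrow> \<bar>MPL_term ((s, a) # w) n\<bar> = \<bar>MPL_part_real w n\<bar> / real n ^ s"
  by (auto simp: abs_mult power_abs)

lemma abs_MPL_part_real_le_harm: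
  "signed_index w \<Longrightarrow> \<bar>MPL_part_real w m\<bar> \<le> harm m ^ length w"
proof (induction w arbitrary: m)
  case (Cons p w)
  obtain s a where p: "p = (s, a)"
    by fastforce
  have s: "s \<ge> 1" and a: "a = 1 \<or> a = -1" and w: "signed_index w"
    using Cons.prems p by auto
  have "\<bar>MPL_part_real (p # w) m\<bar> \<le> (\<Sum>n\<in>{1..<m}. \<bar>MPL_term (p # w) n\<bar>)"
    unfolding p MPL_part_real.simps MPL_term.simps by (rule sum_abs)
  also have "\<dots> \<le> (\<Sum>n\<in>{1..<m}. harm m ^ length w * (1 / real n))"
  proof (rule sum_mono)
    fix n assume n: "n \<in> {1..<m}"
    then have "harm n ^ length w \<le> (harm m ^ length w :: real)"
      by (intro power_mono harm_mono harm_nonneg) simp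
    then have "\<bar>MPL_part_real w n\<bar> \<le> harm m ^ length w"
      using Cons.IH[OF w, of n] by linarith
    moreover have "real n \<le> real n ^ s"
      using n s by (intro self_le_power) auto
    ultimately show "\<bar>MPL_term (p # w) n\<bar> \<le> harm m ^ length w * (1 / real n)"
      unfolding p abs_MPL_term_Cons[OF a] using n by (simp add: frac_le harm_nonneg)
  qed
  also have "\<dots> \<le> harm m ^ length w * harm m"
  proof -
    have "(\<Sum>n\<in>{1..<m}. 1 / real n) \<le> harm m"
      unfolding harm_def inverse_eq_divide by (rule sum_mono2) auto
    then show ?thesis
      unfolding sum_distrib_left[symmetric] by (intro mult_left_mono) (simp_all add: harm_nonneg)
  qed
  finally show ?case
    by (simp add: mult.commute)
qed simp

lemma harm_le_one_plus_ln: "m \<ge> 1 \<Longrightarrow> harm m \<le> 1 + ln (real m)"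
  using decseq_harm_diff_ln[unfolded decseq_def, rule_format, of 0 "m - 1"]
  by (simp add: harm_def)

lemma one_plus_ln_power_le_sqrt:
  assumes "m \<ge> 1"
  shows "(1 + ln (real m)) ^ k \<le> (2 * real k + 2) ^ k * sqrt (real m)"
proof -
  define e where "e = 2 * real k + 2"
  define y where "y = real m powr (1 / e)"
  have m: "real m \<ge> 1" and e: "e \<ge> 2"
    using assms by (simp_all add: e_def)
  have y: "y \<ge> 1"
    unfolding y_def using m e by (simp add: ge_one_powr_ge_zero)
  \<comment> \<open>\<open>ln m = e ln y \<le> e (y - 1)\<close>\<close>
  have "ln (real m) \<le> e * (y - 1)"
    using ln_le_minus_one[of y] y e m by (simp add: y_def field_simps)
  then have "1 + ln (real m) \<le> e * y"
    using e y by (simp add: algebra_simps)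
  then have "(1 + ln (real m)) ^ k \<le> (e * y) ^ k"
    using m by (intro power_mono) auto
  also have "\<dots> = e ^ k * real m powr (real k / e)"
    unfolding y_def using m by (simp add: power_mult_distrib powr_realpow [symmetric] powr_powr)
  also have "\<dots> \<le> e ^ k * real m powr (1 / 2)"
    using m e by (intro mult_left_mono powr_mono) (auto simp: e_def field_simps)
  finally show ?thesis
    using m by (simp add: e_def powr_half_sqrt)
qed

lemma MPL_part_real_sqrt_bound:
  assumes "signed_index w"
  obtains C where "C \<ge> 0" "\<And>m. m \<ge> 1 \<Longrightarrow> \<bar>MPL_part_real w m\<bar> \<le> C * sqrt (real m)"
proof
  fix m :: nat
  assume m: "m \<ge> 1"
  have "\<bar>MPL_part_real w m\<bar> \<le> harm m ^ length w"
    by (rule abs_MPL_part_real_le_harm[OF assms])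
  also have "\<dots> \<le> (1 + ln (real m)) ^ length w"
    by (intro power_mono harm_le_one_plus_ln m harm_nonneg)
  also have "\<dots> \<le> (2 * real (length w) + 2) ^ length w * sqrt (real m)"
    by (rule one_plus_ln_power_le_sqrt[OF m])
  finally show "\<bar>MPL_part_real w m\<bar> \<le> (2 * real (length w) + 2) ^ length w * sqrt (real m)" .
qed simp

lemma MPL_term_bound:
  assumes "signed_index w"
  obtains C where "C \<ge> 0" "\<And>n. n \<ge> 1 \<Longrightarrow> \<bar>MPL_term w n\<bar> \<le> C / sqrt (real n)"
proof (cases w)
  case (Cons p r)
  obtain s a where p: "p = (s, a)"
    by fastforce
  have s: "s \<ge> 1" and a: "a = 1 \<or> a = -1" and r: "signed_index r"
    using assms Cons p by auto
  obtain C where C: "C \<ge> 0" "\<And>m. m \<ge> 1 \<Longrightarrow> \<bar>MPL_part_real r m\<bar> \<le> C * sqrt (real m)"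
    using MPL_part_real_sqrt_bound[OF r] by blast
  show ?thesis
  proof (rule that[OF C(1)])
    fix n :: nat
    assume n: "n \<ge> 1"
    have "real n \<le> real n ^ s"
      using n s by (intro self_le_power) auto
    then have "\<bar>MPL_term w n\<bar> \<le> C * sqrt (real n) / real n"
      unfolding Cons p abs_MPL_term_Cons[OF a] using C n by (simp add: frac_le)
    also have "\<dots> = C / sqrt (real n)"
      using n by (simp add: field_simps flip: real_sqrt_mult)
    finally show "\<bar>MPL_term w n\<bar> \<le> C / sqrt (real n)" .
  qed
qed (auto intro: that[of 0])

lemma summable_inverse_times_sqrt: "summable (\<lambda>n. 1 / (real n * sqrt (real n)))"
proof -
  have "1 / (real n * sqrt (real n)) = real n powr (-3/2)" for n
  proof (cases "n = 0")
    case False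
    have "real n powr (-3/2) = 1 / real n powr (1 + 1/2)"
      by (simp add: powr_minus_divide)
    also have "\<dots> = 1 / (real n powr 1 * real n powr (1/2))"
      by (simp only: powr_add)
    finally have "real n powr (-3/2) = 1 / (real n powr 1 * real n powr (1/2))" .
    then show ?thesis
      using False by (simp add: powr_half_sqrt)
  qed simp
  then show ?thesis
    by (simp add: summable_real_powr_iff)
qed

lemma summable_MPL_term_Cons_ge_2:
  assumes "signed_index ((s, a) # w)" "s \<ge> 2"
  shows "summable (MPL_term ((s, a) # w))"
proof -
  have a: "a = 1 \<or> a = -1" and w: "signed_index w"
    using assms(1) by auto
  obtain C where C: "C \<ge> 0" "\<And>m. m \<ge> 1 \<Longrightarrow> \<bar>MPL_part_real w m\<bar> \<le> C * sqrt (real m)"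
    using MPL_part_real_sqrt_bound[OF w] by blast
  show ?thesis
  proof (rule summable_comparison_test'[where N = 1])
    show "summable (\<lambda>n. C * (1 / (real n * sqrt (real n))))"
      by (intro summable_mult summable_inverse_times_sqrt)
    fix n :: nat
    assume n: "n \<ge> 1"
    have "real n ^ 2 \<le> real n ^ s"
      using n assms(2) by (intro power_increasing) auto
    then have "\<bar>MPL_term ((s, a) # w) n\<bar> \<le> C * sqrt (real n) / real n ^ 2"
      unfolding abs_MPL_term_Cons[OF a] using C n by (intro frac_le) auto
    also have "\<dots> = C * (1 / (real n * sqrt (real n)))"
      using n by (simp add: field_simps power2_eq_square flip: real_sqrt_mult)
    finally show "norm (MPL_term ((s, a) # w) n) \<le> C * (1 / (real n * sqrt (real n)))"
      by simp
  qed
qed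

text \<open>For \<open>s = 1\<close> the series only converges conditionally: its terms are \<open>(-1)^n b n\<close> with
  \<open>b n = MPL_part_real w n / n\<close>, and \<open>b\<close> has bounded variation because \<open>b (n+1) - b n\<close>
  is \<open>O(n^(-3/2))\<close>.\<close>

lemma MPL_part_real_over_n_tendsto_0:
  assumes "signed_index w"
  shows "(\<lambda>n. MPL_part_real w n / real n) \<longlonglongrightarrow> 0"
proof -
  obtain C where C: "\<And>m. m \<ge> 1 \<Longrightarrow> \<bar>MPL_part_real w m\<bar> \<le> C * sqrt (real m)"
    using MPL_part_real_sqrt_bound[OF assms] by blast
  show ?thesis
  proof (rule Lim_null_comparison)
    show "eventually (\<lambda>n. norm (MPL_part_real w n / real n) \<le> C * (sqrt (real n) / real n)) sequentially"
      using eventually_ge_at_top[of 1]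
      by eventually_elim (use C in \<open>auto simp: divide_right_mono\<close>)
    have "(\<lambda>n. sqrt (real n) / real n) \<longlonglongrightarrow> 0"
      by real_asymp
    then show "(\<lambda>n. C * (sqrt (real n) / real n)) \<longlonglongrightarrow> 0"
      by (rule tendsto_mult_right_zero)
  qed
qed

lemma summable_variation_MPL_part_real_over_n:
  assumes w: "signed_index w"
  shows "summable (\<lambda>n. \<bar>MPL_part_real w (Suc n) / real (Suc n) - MPL_part_real w n / real n\<bar>)"
proof -
  obtain C where C: "C \<ge> 0" "\<And>m. m \<ge> 1 \<Longrightarrow> \<bar>MPL_part_real w m\<bar> \<le> C * sqrt (real m)"
    using MPL_part_real_sqrt_bound[OF w] by blast
  obtain C' where C': "C' \<ge> 0" "\<And>n. n \<ge> 1 \<Longrightarrow> \<bar>MPL_term w n\<bar> \<le> C' / sqrt (real n)"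
    using MPL_term_bound[OF w] by blast
  show ?thesis
  proof (rule summable_comparison_test'[where N = 1])
    show "summable (\<lambda>n. (C' + C) * (1 / (real n * sqrt (real n))))"
      by (intro summable_mult summable_inverse_times_sqrt)
    fix n :: nat
    assume n: "n \<ge> 1"
    have diff: "MPL_part_real w (Suc n) / real (Suc n) - MPL_part_real w n / real n
        = MPL_term w n / (real n + 1) - MPL_part_real w n / (real n * (real n + 1))"
      using n unfolding MPL_part_real_Suc[OF w]
      by (simp add: divide_simps) (simp add: algebra_simps)
    have "\<bar>MPL_term w n\<bar> / (real n + 1) \<le> (C' / sqrt (real n)) / real n"
      using C'(2)[OF n] C'(1) n by (intro frac_le) auto
    then have bound1: "\<bar>MPL_term w n / (real n + 1)\<bar> \<le> C' * (1 / (real n * sqrt (real n)))"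
      by (simp add: field_simps)
    have "\<bar>MPL_part_real w n\<bar> / (real n * (real n + 1)) \<le> C * sqrt (real n) / (real n * real n)"
      using C(2)[OF n] C(1) n by (intro frac_le) auto
    also have "\<dots> = C * (1 / (real n * sqrt (real n)))"
      using n by (smt (verit) divide_divide_eq_right mult_cancel_left2 one_of_nat_le_iff
        real_div_sqrt times_divide_eq_right)
    finally have bound2: "\<bar>MPL_part_real w n / (real n * (real n + 1))\<bar> \<le> C * (1 / (real n * sqrt (real n)))"
      by (simp add: abs_mult)
    show "norm \<bar>MPL_part_real w (Suc n) / real (Suc n) - MPL_part_real w n / real n\<bar>
        \<le> (C' + C) * (1 / (real n * sqrt (real n)))"
      unfolding diff real_norm_def abs_abs distrib_right
      using abs_triangle_ineq4[of "MPL_term w n / (real n + 1)" "MPL_part_real w n / (real n * (real n + 1))"]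
        bound1 bound2 by linarith
  qed
qed

lemma summable_MPL_term_Cons_1:
  assumes "signed_index w"
  shows "summable (MPL_term ((1, -1) # w))"
proof -
  have "MPL_term ((1, -1) # w) = (\<lambda>n. (-1) ^ n * (MPL_part_real w n / real n))"
    by (simp add: fun_eq_iff)
  then show ?thesis
    using summable_alternating_bounded_variation[OF MPL_part_real_over_n_tendsto_0
        summable_variation_MPL_part_real_over_n, OF assms assms] by simp
qed

lemma summable_MPL_term:
  assumes "admissible_index w"
  shows "summable (MPL_term w)"
proof -
  obtain s a r where w: "w = (s, a) # r"
    using assms by (metis admissible_index_def list.exhaust surj_pair)
  have "s \<ge> 2 \<or> (s = 1 \<and> a = -1)" and r: "signed_index r"
    using assms w by (auto simp: admissible_index_def)
  then show ?thesis
    using summable_MPL_term_Cons_ge_2 summable_MPL_term_Cons_1 assms w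
    by (auto simp: admissible_index_def)
qed

definition complex_index :: "mpl_index \<Rightarrow> (nat \<times> complex) list" where
  "complex_index = map (\<lambda>(s, a). (s, complex_of_real a))"

lemma MPL_part_complex_index: "MPL_part (complex_index w) m = of_real (MPL_part_real w m)"
  by (induction w arbitrary: m) (auto simp: complex_index_def)

lemma MPL_complex_index:
  assumes "admissible_index w"
  shows "MPL (complex_index w) = of_real (suminf (MPL_term w))"
proof -
  have "(\<lambda>m. MPL_part_real w m) \<longlonglongrightarrow> suminf (MPL_term w)"
    using summable_LIMSEQ[OF summable_MPL_term[OF assms]] assms
    by (simp add: MPL_part_real_eq_sum admissible_index_def)
  then have "(\<lambda>m. MPL_part (complex_index w) m) \<longlonglongrightarrow> of_real (suminf (MPL_term w))"
    unfolding MPL_part_complex_index by (rule tendsto_of_real)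
  then show ?thesis
    unfolding MPL_def by (rule limI)
qed

lemma MPL_complex_index_in_CMZV_generators:
  assumes "admissible_index w" "sum_list (map fst w) = W"
  shows "MPL (complex_index w) \<in> CMZV_generators 2 W"
proof -
  obtain s a r where w: "w = (s, a) # r"
    using assms(1) by (cases w) (auto simp: admissible_index_def)
  have "(s, a) \<noteq> (1, 1)" "signed_index w"
    using assms(1) w by (simp_all add: admissible_index_def)
  have "\<forall>p\<in>set (complex_index w). fst p \<ge> 1 \<and> snd p ^ 2 = 1"
    using \<open>signed_index w\<close> by (auto simp: complex_index_def signed_index_def)
  moreover have "sum_list (map fst (complex_index w)) = W"
    using assms(2) by (simp add: complex_index_def case_prod_beta o_def)
  moreover have "complex_index w \<noteq> []" "hd (complex_index w) \<noteq> (1, 1)"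
    using w \<open>(s, a) \<noteq> (1, 1)\<close> by (simp_all add: complex_index_def)
  ultimately show ?thesis
    unfolding CMZV_generators_def by (intro CollectI exI[of _ "complex_index w"]) simp
qed

lemma zero_in_CMZV: "0 \<in> CMZV N W"
  unfolding CMZV_def by (intro CollectI exI[of _ "{}"]) auto

lemma rat_mult_generator_in_CMZV:
  "g \<in> CMZV_generators N W \<Longrightarrow> of_real (of_rat q) * g \<in> CMZV N W"
  unfolding CMZV_def by (intro CollectI exI[of _ "{g}"] exI[of _ "\<lambda>_. q"]) auto

lemma add_in_CMZV:
  assumes "x \<in> CMZV N W" "y \<in> CMZV N W"
  shows "x + y \<in> CMZV N W"
proof -
  obtain S c where S: "finite S" "S \<subseteq> CMZV_generators N W"
      and x: "x = (\<Sum>g\<in>S. of_real (of_rat (c g)) * g)"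
    using assms(1) unfolding CMZV_def by blast
  obtain T d where T: "finite T" "T \<subseteq> CMZV_generators N W"
      and y: "y = (\<Sum>g\<in>T. of_real (of_rat (d g)) * g)"
    using assms(2) unfolding CMZV_def by blast
  define c' where "c' g = (if g \<in> S then c g else 0)" for g
  define d' where "d' g = (if g \<in> T then d g else 0)" for g
  have "x = (\<Sum>g\<in>S \<union> T. of_real (of_rat (c' g)) * g)"
    unfolding x c'_def using S T by (intro sum.mono_neutral_cong_left) auto
  moreover have "y = (\<Sum>g\<in>S \<union> T. of_real (of_rat (d' g)) * g)"
    unfolding y d'_def using S T by (intro sum.mono_neutral_cong_left) auto
  ultimately have "x + y = (\<Sum>g\<in>S \<union> T. of_real (of_rat (c' g + d' g)) * g)"
    by (simp add: of_rat_add distrib_right sum.distrib)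
  then show ?thesis
    unfolding CMZV_def using S T by (intro CollectI exI[of _ "S \<union> T"] exI[of _ "\<lambda>g. c' g + d' g"]) simp
qed

section \<open>One-variable multiple polylogarithms\<close>

definition mpl_series :: "mpl_index \<Rightarrow> real \<Rightarrow> real" where
  "mpl_series w x = (\<Sum>n. MPL_term w n * x ^ n)"

lemma MPL_term_bounded:
  assumes "signed_index w"
  obtains C where "\<And>n. \<bar>MPL_term w n\<bar> \<le> C"
proof -
  obtain C where C: "C \<ge> 0" "\<And>n. n \<ge> 1 \<Longrightarrow> \<bar>MPL_term w n\<bar> \<le> C / sqrt (real n)"
    using MPL_term_bound[OF assms] by blast
  have "\<bar>MPL_term w n\<bar> \<le> C" for n
  proof (cases "n = 0")
    case False
    then have "C / sqrt (real n) \<le> C"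
      using C(1) by (simp add: divide_le_eq mult_le_cancel_left1)
    then show ?thesis
      using C(2)[of n] False by simp
  qed (use C MPL_term_0[OF assms] in simp)
  then show ?thesis
    using that by blast
qed

lemma summable_mpl_series:
  assumes "signed_index w" "\<bar>x\<bar> < 1"
  shows "summable (\<lambda>n. MPL_term w n * x ^ n)"
proof -
  obtain C where "\<And>n. \<bar>MPL_term w n\<bar> \<le> C"
    using MPL_term_bounded[OF assms(1)] by blast
  then show ?thesis
    using assms(2) by (rule summable_powser_bounded)
qed

lemma DERIV_mpl_series:
  assumes "signed_index w" "\<bar>x\<bar> < 1"
  shows "DERIV (mpl_series w) x :> (\<Sum>n. diffs (MPL_term w) n * x ^ n)"
  unfolding mpl_series_def[abs_def]
  by (rule termdiffs_strong'[where K = 1]) (use assms summable_mpl_series in auto)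

lemma isCont_mpl_series: "signed_index w \<Longrightarrow> \<bar>x\<bar> < 1 \<Longrightarrow> isCont (mpl_series w) x"
  using DERIV_mpl_series DERIV_isCont by blast

lemma mpl_series_0: "signed_index w \<Longrightarrow> mpl_series w 0 = 0"
  by (simp add: mpl_series_def powser_zero MPL_term_0)

lemma mpl_series_Nil [simp]: "mpl_series [] = (\<lambda>x. 0)"
  by (simp add: mpl_series_def[abs_def])

lemma mpl_series_neg_one:
  assumes "\<bar>x\<bar> < 1"
  shows "mpl_series [(1, -1)] x = - ln (1 + x)"
proof -
  have "(\<lambda>n. MPL_term [(1, -1)] n * x ^ n) sums mpl_series [(1, -1)] x"
    unfolding mpl_series_def by (rule summable_sums[OF summable_mpl_series]) (use assms in simp_all)
  then have "(\<lambda>n. MPL_term [(1, -1)] (Suc n) * x ^ Suc n) sums mpl_series [(1, -1)] x"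
    by (subst sums_Suc_iff) simp
  moreover have "MPL_term [(1, -1)] (Suc n) * x ^ Suc n = - ((-1) ^ n * (1 / real (n + 1)) * (1 + x - 1) ^ Suc n)" for n
    by simp
  ultimately have "(\<lambda>n. (-1) ^ n * (1 / real (n + 1)) * (1 + x - 1) ^ Suc n) sums (- mpl_series [(1, -1)] x)"
    using sums_minus by fastforce
  then show ?thesis
    using ln_series[of "1 + x"] assms by (simp add: sums_iff)
qed

lemma tendsto_mpl_series_at_left_1:
  "admissible_index w \<Longrightarrow> (mpl_series w \<longlongrightarrow> suminf (MPL_term w)) (at_left 1)"
  unfolding mpl_series_def[abs_def] by (intro Abel_limit_theorem summable_MPL_term)

fun incr_head :: "mpl_index \<Rightarrow> mpl_index" where
  "incr_head [] = []"
| "incr_head ((s, a) # w) = (Suc s, a) # w"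

fun cons_neg_one :: "mpl_index \<Rightarrow> mpl_index" where
  "cons_neg_one [] = []"
| "cons_neg_one ((s, a) # w) = (1, -1) # (s, -a) # w"

lemma signed_index_incr_head: "signed_index w \<Longrightarrow> signed_index (incr_head w)"
  by (cases w rule: incr_head.cases) auto

lemma signed_index_cons_neg_one: "signed_index w \<Longrightarrow> signed_index (cons_neg_one w)"
  by (cases w rule: cons_neg_one.cases) auto

lemma admissible_index_incr_head:
  "signed_index w \<Longrightarrow> w \<noteq> [] \<Longrightarrow> admissible_index (incr_head w)"
  by (cases w rule: incr_head.cases) (auto simp: admissible_index_def)

lemma admissible_index_cons_neg_one:
  "signed_index w \<Longrightarrow> w \<noteq> [] \<Longrightarrow> admissible_index (cons_neg_one w)"
  by (cases w rule: cons_neg_one.cases) (auto simp: admissible_index_def)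

lemma weight_incr_head:
  "w \<noteq> [] \<Longrightarrow> sum_list (map fst (incr_head w)) = Suc (sum_list (map fst w))"
  by (cases w rule: incr_head.cases) auto

lemma weight_cons_neg_one:
  "w \<noteq> [] \<Longrightarrow> sum_list (map fst (cons_neg_one w)) = Suc (sum_list (map fst w))"
  by (cases w rule: cons_neg_one.cases) auto

lemma DERIV_mpl_series_incr_head:
  assumes "signed_index w" "\<bar>x\<bar> < 1" "x \<noteq> 0"
  shows "DERIV (mpl_series (incr_head w)) x :> mpl_series w x / x"
proof (cases w)
  case (Cons p r)
  have diffs_eq: "diffs (MPL_term (incr_head w)) n = MPL_term w (Suc n)" for n
    using Cons by (cases p) (simp add: diffs_def)
  have "(\<Sum>n. diffs (MPL_term (incr_head w)) n * x ^ n) = mpl_series w x / x"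
    unfolding diffs_eq mpl_series_def
    by (rule powser_Suc_eq_divide[OF MPL_term_0 summable_mpl_series]) (use assms in auto)
  then show ?thesis
    using DERIV_mpl_series[OF signed_index_incr_head[OF assms(1)] assms(2)] by simp
qed simp

lemma DERIV_mpl_series_cons_neg_one:
  assumes "signed_index w" "\<bar>x\<bar> < 1"
  shows "DERIV (mpl_series (cons_neg_one w)) x :> - mpl_series w x / (1 + x)"
proof (cases w)
  case (Cons p r)
  obtain s a where p: "p = (s, a)"
    by fastforce
  have s: "s \<ge> 1" and w': "signed_index ((s, -a) # r)"
    using assms(1) Cons p by auto
  define d where "d = diffs (MPL_term (cons_neg_one w))"
  have d_eq: "d n = (-1) ^ Suc n * MPL_part_real ((s, -a) # r) (Suc n)" for n
    using Cons p by (simp add: d_def diffs_def)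
  \<comment> \<open>the coefficientwise form of \<open>(1 + x) D = - mpl_series w x\<close>\<close>
  have d_rec: "d n + (if n = 0 then 0 else d (n - 1)) = - MPL_term w n" for n
  proof (cases n)
    case (Suc m)
    then show ?thesis
      using Cons p MPL_part_real_Suc[OF w', of "Suc m"] by (simp add: d_eq power_minus' algebra_simps)
  qed (use Cons p s in \<open>simp add: d_eq\<close>)
  have "summable (\<lambda>n. d n * x ^ n)"
    unfolding d_def using assms
    by (intro termdiff_converges[where K = 1] summable_mpl_series signed_index_cons_neg_one) auto
  then have D: "(\<lambda>n. d n * x ^ n) sums (\<Sum>n. d n * x ^ n)"
    by (rule summable_sums)
  have "(\<lambda>n. (d n + (if n = 0 then 0 else d (n - 1))) * x ^ n)
      sums ((\<Sum>n. d n * x ^ n) + x * (\<Sum>n. d n * x ^ n))"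
    unfolding distrib_right by (intro sums_add D sums_powser_shift)
  moreover have "(\<lambda>n. - MPL_term w n * x ^ n) sums (- mpl_series w x)"
    unfolding mpl_series_def using sums_minus[OF summable_sums[OF summable_mpl_series[OF assms]]]
    by simp
  ultimately have "(1 + x) * (\<Sum>n. d n * x ^ n) = - mpl_series w x"
    unfolding d_rec by (simp add: sums_iff algebra_simps)
  then have "(\<Sum>n. d n * x ^ n) = - mpl_series w x / (1 + x)"
    using assms(2) by (simp add: field_simps)
  then show ?thesis
    using DERIV_mpl_series[OF signed_index_cons_neg_one[OF assms(1)] assms(2)] by (simp add: d_def)
qed simp

type_synonym mpl_comb = "(rat \<times> mpl_index) list"

definition comb_series :: "mpl_comb \<Rightarrow> real \<Rightarrow> real" where
  "comb_series cs x = (\<Sum>(q, w)\<leftarrow>cs. of_rat q * mpl_series w x)"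

definition comb_value :: "mpl_comb \<Rightarrow> real" where
  "comb_value cs = (\<Sum>(q, w)\<leftarrow>cs. of_rat q * suminf (MPL_term w))"

definition admissible_comb :: "nat \<Rightarrow> mpl_comb \<Rightarrow> bool" where
  "admissible_comb W cs \<longleftrightarrow> (\<forall>(q, w)\<in>set cs. admissible_index w \<and> sum_list (map fst w) = W)"

lemma comb_series_simps [simp]:
  "comb_series [] = (\<lambda>x. 0)"
  "comb_series ((q, w) # cs) = (\<lambda>x. of_rat q * mpl_series w x + comb_series cs x)"
  by (simp_all add: comb_series_def[abs_def])

lemma comb_value_simps [simp]:
  "comb_value [] = 0"
  "comb_value ((q, w) # cs) = of_rat q * suminf (MPL_term w) + comb_value cs"
  by (simp_all add: comb_value_def)

lemma admissible_comb_simps [simp]: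
  "admissible_comb W []"
  "admissible_comb W ((q, w) # cs) \<longleftrightarrow>
     admissible_index w \<and> sum_list (map fst w) = W \<and> admissible_comb W cs"
  by (auto simp: admissible_comb_def)

fun comb_step :: "mpl_comb \<Rightarrow> mpl_comb" where
  "comb_step [] = []"
| "comb_step ((q, w) # cs) = (2 * q, incr_head w) # (q, cons_neg_one w) # comb_step cs"

lemma comb_series_0: "\<forall>(q, w)\<in>set cs. signed_index w \<Longrightarrow> comb_series cs 0 = 0"
  by (induction cs) (auto simp: mpl_series_0)

lemma isCont_comb_series:
  "\<forall>(q, w)\<in>set cs. signed_index w \<Longrightarrow> \<bar>x\<bar> < 1 \<Longrightarrow> isCont (comb_series cs) x"
  by (induction cs) (auto intro!: continuous_intros isCont_mpl_series)

lemma DERIV_comb_series_comb_step: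
  assumes "\<forall>(q, w)\<in>set cs. signed_index w" "0 < x" "x < 1"
  shows "DERIV (comb_series (comb_step cs)) x :> (2 / x - 1 / (1 + x)) * comb_series cs x"
  using assms(1)
proof (induction cs rule: comb_step.induct)
  case (2 q w cs)
  have w: "signed_index w" and cs: "\<forall>(q, w)\<in>set cs. signed_index w"
    using "2.prems" by auto
  have "DERIV (\<lambda>x. of_rat (2 * q) * mpl_series (incr_head w) x
        + (of_rat q * mpl_series (cons_neg_one w) x + comb_series (comb_step cs) x)) x :>
      of_rat (2 * q) * (mpl_series w x / x)
        + (of_rat q * (- mpl_series w x / (1 + x)) + (2 / x - 1 / (1 + x)) * comb_series cs x)"
    using assms(2,3)
    by (intro DERIV_add DERIV_cmult DERIV_mpl_series_incr_head DERIV_mpl_series_cons_neg_one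
        "2.IH" w cs) auto
  moreover have "of_rat (2 * q) * (mpl_series w x / x)
        + (of_rat q * (- mpl_series w x / (1 + x)) + (2 / x - 1 / (1 + x)) * comb_series cs x)
      = (2 / x - 1 / (1 + x)) * (of_rat q * mpl_series w x + comb_series cs x)"
    using assms(2,3) by (simp add: of_rat_mult divide_simps) (simp add: algebra_simps)
  ultimately show ?case
    by simp
qed simp

lemma admissible_comb_comb_step:
  "admissible_comb W cs \<Longrightarrow> admissible_comb (Suc W) (comb_step cs)"
proof (induction cs rule: comb_step.induct)
  case (2 q w cs)
  then have "signed_index w" "w \<noteq> []"
    by (simp_all add: admissible_index_def)
  with 2 show ?case
    by (simp add: admissible_index_incr_head admissible_index_cons_neg_one
        weight_incr_head weight_cons_neg_one)
qed simp

lemma tendsto_comb_series_at_left_1: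
  "admissible_comb W cs \<Longrightarrow> (comb_series cs \<longlongrightarrow> comb_value cs) (at_left 1)"
proof (induction cs)
  case (Cons p cs)
  then show ?case
    by (cases p) (auto intro!: tendsto_intros tendsto_mpl_series_at_left_1)
qed simp

lemma comb_value_in_CMZV: "admissible_comb W cs \<Longrightarrow> of_real (comb_value cs) \<in> CMZV 2 W"
proof (induction cs)
  case (Cons p cs)
  obtain q w where p: "p = (q, w)"
    by fastforce
  have "of_real (comb_value (p # cs)) = of_real (of_rat q) * MPL (complex_index w) + of_real (comb_value cs)"
    using Cons.prems p by (simp add: MPL_complex_index)
  also have "\<dots> \<in> CMZV 2 W"
    using Cons p
    by (intro add_in_CMZV rat_mult_generator_in_CMZV MPL_complex_index_in_CMZV_generators) auto
  finally show ?case .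
qed (simp add: zero_in_CMZV)

section \<open>The central binomial series\<close>

lemma Suc_times_central_binomial:
  "Suc n * ((2 * Suc n) choose Suc n) = 2 * (2 * n + 1) * ((2 * n) choose n)"
proof -
  have "Suc n * ((2 * Suc n) choose Suc n) = 2 * (Suc n * (Suc (2 * n) choose Suc n))"
    using Suc_times_binomial[of n "Suc (2 * n)"] binomial_symmetric[of n "Suc (2 * n)"] by simp
  also have "Suc n * (Suc (2 * n) choose Suc n) = Suc (2 * n) * ((2 * n) choose n)"
    by (rule Suc_times_binomial)
  finally show ?thesis
    by simp
qed

definition central_coeff :: "nat \<Rightarrow> nat \<Rightarrow> real" where
  "central_coeff s n = 1 / (real n ^ s * real ((2 * n) choose n))"

definition central_series :: "nat \<Rightarrow> real \<Rightarrow> real" where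
  "central_series s u = (\<Sum>n. central_coeff s n * u ^ n)"

lemma abs_central_coeff_le_1: "\<bar>central_coeff s n\<bar> \<le> 1"
proof (cases "n = 0")
  case False
  have "1 * 1 \<le> real n ^ s * real ((2 * n) choose n)"
    using False zero_less_binomial[of n "2 * n"]
    by (intro mult_mono one_le_power) (simp_all add: Suc_le_eq)
  then show ?thesis
    by (simp add: central_coeff_def)
qed (simp add: central_coeff_def power_0_left)

lemma central_coeff_0: "s \<ge> 1 \<Longrightarrow> central_coeff s 0 = 0"
  by (simp add: central_coeff_def)

lemma diffs_central_coeff: "diffs (central_coeff (Suc s)) n = central_coeff s (Suc n)"
  by (simp add: diffs_def central_coeff_def)

lemma central_coeff_recurrence:
  "4 * central_coeff 0 (Suc n) - central_coeff 0 n = 2 * central_coeff 1 (Suc n)"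
proof -
  define X where "X = real ((2 * Suc n) choose Suc n)"
  define Y where "Y = real ((2 * n) choose n)"
  have "X > 0" "Y > 0"
    unfolding X_def Y_def of_nat_0_less_iff by (rule zero_less_binomial; simp)+
  moreover have "(real n + 1) * X = 2 * (2 * real n + 1) * Y"
    unfolding X_def Y_def using Suc_times_central_binomial[of n, THEN arg_cong[of _ _ real]]
    by (simp add: algebra_simps)
  ultimately show ?thesis
    unfolding central_coeff_def X_def[symmetric] Y_def[symmetric]
    by (simp add: divide_simps) (simp add: algebra_simps)
qed

lemma summable_central_series: "\<bar>u\<bar> < 1 \<Longrightarrow> summable (\<lambda>n. central_coeff s n * u ^ n)"
  using abs_central_coeff_le_1 by (rule summable_powser_bounded)

lemma DERIV_central_series:
  "\<bar>u\<bar> < 1 \<Longrightarrow> DERIV (central_series s) u :> (\<Sum>n. diffs (central_coeff s) n * u ^ n)"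
  unfolding central_series_def[abs_def]
  by (rule termdiffs_strong'[where K = 1]) (use summable_central_series in auto)

lemma central_series_0: "s \<ge> 1 \<Longrightarrow> central_series s 0 = 0"
  by (simp add: central_series_def powser_zero central_coeff_0)

lemma DERIV_central_series_Suc:
  assumes "s \<ge> 1" "\<bar>u\<bar> < 1" "u \<noteq> 0"
  shows "DERIV (central_series (Suc s)) u :> central_series s u / u"
  using DERIV_central_series[OF assms(2), of "Suc s"] assms
  by (simp add: diffs_central_coeff powser_Suc_eq_divide central_coeff_0 summable_central_series
      central_series_def)

lemma central_series_1_ode:
  assumes "\<bar>u\<bar> < 1"
  shows "(4 * u - u\<^sup>2) * (\<Sum>n. diffs (central_coeff 1) n * u ^ n) = 2 * central_series 1 u + u"
proof -
  define e where "e = diffs (central_coeff 1)"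
  define E where "E = (\<Sum>n. e n * u ^ n)"
  define e1 where "e1 n = (if n = 0 then 0 else e (n - 1))" for n
  define e2 where "e2 n = (if n = 0 then 0 else e1 (n - 1))" for n
  have "(\<lambda>n. e n * u ^ n) sums E"
    unfolding E_def e_def
    using assms by (intro summable_sums termdiff_converges[where K = 1] summable_central_series) auto
  then have e1_sums: "(\<lambda>n. e1 n * u ^ n) sums (u * E)"
    unfolding e1_def by (rule sums_powser_shift)
  then have e2_sums: "(\<lambda>n. e2 n * u ^ n) sums (u * (u * E))"
    unfolding e2_def by (rule sums_powser_shift)
  have "(\<lambda>n. 4 * (e1 n * u ^ n) - e2 n * u ^ n - 2 * (central_coeff 1 n * u ^ n))
      sums (4 * (u * E) - u * (u * E) - 2 * central_series 1 u)"
    unfolding central_series_def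
    by (intro sums_diff sums_mult e1_sums e2_sums summable_sums summable_central_series assms)
  moreover have "4 * (e1 n * u ^ n) - e2 n * u ^ n - 2 * (central_coeff 1 n * u ^ n)
      = (if n = 1 then u ^ n else 0)" for n
  proof -
    have "4 * e1 n - e2 n - 2 * central_coeff 1 n = (if n = 1 then 1 else 0)"
    proof (cases n)
      case (Suc k)
      then show ?thesis
        using central_coeff_recurrence[of k]
        by (cases k) (simp_all add: e1_def e2_def e_def diffs_central_coeff central_coeff_def)
    qed (simp add: e1_def e2_def central_coeff_0)
    then have "(4 * e1 n - e2 n - 2 * central_coeff 1 n) * u ^ n = (if n = 1 then u ^ n else 0)"
      by simp
    then show ?thesis
      by (simp only: left_diff_distrib mult.assoc)
  qed
  ultimately have "(\<lambda>n. if n = 1 then u ^ n else 0) sums (4 * (u * E) - u * (u * E) - 2 * central_series 1 u)"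
    by simp
  then have "4 * (u * E) - u * (u * E) - 2 * central_series 1 u = u"
    using sums_single[of 1 "\<lambda>n. u ^ n"] by (simp add: sums_iff)
  then show ?thesis
    unfolding E_def e_def by (simp add: power2_eq_square algebra_simps)
qed

definition central_arg :: "real \<Rightarrow> real" where
  "central_arg x = - (x\<^sup>2) / (1 + x)"

definition central_pullback :: "nat \<Rightarrow> real \<Rightarrow> real" where
  "central_pullback s x = central_series s (central_arg x)"

lemma abs_central_arg_less_1:
  assumes "0 \<le> x" "x \<le> 1"
  shows "\<bar>central_arg x\<bar> < 1"
proof -
  have "x\<^sup>2 \<le> x"
    using assms by (simp add: power2_eq_square mult_left_le_one_le)
  then show ?thesis
    using assms by (simp add: central_arg_def divide_less_eq)
qed

lemma DERIV_central_arg: "x \<noteq> -1 \<Longrightarrow> DERIV central_arg x :> - (x * (2 + x)) / (1 + x)\<^sup>2"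
  unfolding central_arg_def[abs_def]
  by (auto intro!: derivative_eq_intros simp: add_eq_0_iff power2_eq_square divide_simps)
    (simp add: algebra_simps)

lemma DERIV_central_pullback:
  assumes "0 \<le> x" "x \<le> 1"
  shows "DERIV (central_pullback s) x :>
    (\<Sum>n. diffs (central_coeff s) n * central_arg x ^ n) * (- (x * (2 + x)) / (1 + x)\<^sup>2)"
  unfolding central_pullback_def[abs_def]
  using DERIV_chain2[OF DERIV_central_series[OF abs_central_arg_less_1] DERIV_central_arg] assms
  by simp

lemma isCont_central_pullback: "0 \<le> x \<Longrightarrow> x \<le> 1 \<Longrightarrow> isCont (central_pullback s) x"
  using DERIV_central_pullback DERIV_isCont by blast

lemma central_pullback_0: "s \<ge> 1 \<Longrightarrow> central_pullback s 0 = 0"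
  by (simp add: central_pullback_def central_arg_def central_series_0)

lemma DERIV_central_pullback_Suc:
  assumes "s \<ge> 1" "0 < x" "x < 1"
  shows "DERIV (central_pullback (Suc s)) x :> (2 / x - 1 / (1 + x)) * central_pullback s x"
proof -
  have u: "\<bar>central_arg x\<bar> < 1" "central_arg x \<noteq> 0"
    using assms abs_central_arg_less_1[of x] by (simp_all add: central_arg_def)
  have "(\<Sum>n. diffs (central_coeff (Suc s)) n * central_arg x ^ n)
      = central_pullback s x / central_arg x"
    unfolding central_pullback_def
    by (rule DERIV_unique[OF DERIV_central_series[OF u(1)] DERIV_central_series_Suc[OF assms(1) u]])
  moreover have "1 / central_arg x * (- (x * (2 + x)) / (1 + x)\<^sup>2) = 2 / x - 1 / (1 + x)"
    using assms by (simp add: central_arg_def divide_simps power2_eq_square)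
  ultimately have "(\<Sum>n. diffs (central_coeff (Suc s)) n * central_arg x ^ n) * (- (x * (2 + x)) / (1 + x)\<^sup>2)
      = (2 / x - 1 / (1 + x)) * central_pullback s x"
    by (metis times_divide_eq_left times_divide_eq_right mult.commute mult_1)
  then show ?thesis
    using DERIV_central_pullback[of x "Suc s"] assms by simp
qed

lemma ode_solution_vanishes:
  fixes D D' :: "real \<Rightarrow> real"
  assumes deriv: "\<And>y. 0 \<le> y \<Longrightarrow> y \<le> b \<Longrightarrow> (D has_field_derivative D' y) (at y)"
    and ode: "\<And>y. 0 \<le> y \<Longrightarrow> y \<le> b \<Longrightarrow> y * (2 + y) * D' y = 2 * D y"
    and "D' 0 = 0" "0 \<le> x" "x \<le> b"
  shows "D x = 0"
proof (cases "x = 0")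
  case False
  then have x: "0 < x" "x \<le> b"
    using assms by auto
  have D0: "D 0 = 0"
    using ode[of 0] x by simp
  \<comment> \<open>the differential equation says that \<open>E\<close> is constant on \<open>(0, b]\<close>\<close>
  define E where "E y = D y * (2 + y) / y" for y
  have E_deriv: "(E has_field_derivative 0) (at y)" if "0 < y" "y \<le> b" for y
  proof -
    have "(E has_field_derivative (y * (2 + y) * D' y - 2 * D y) / y\<^sup>2) (at y)"
      unfolding E_def[abs_def] using that deriv[of y]
      by (auto intro!: derivative_eq_intros simp: power2_eq_square divide_simps) (simp add: algebra_simps)
    then show ?thesis
      using ode[of y] that by simp
  qed
  have "E x = E t" if "0 < t" "t < x" for t
  proof (rule DERIV_isconst_end[of t x E])
    show "continuous_on {t..x} E"
      using that x by (intro continuous_at_imp_continuous_on) (auto intro!: DERIV_isCont[OF E_deriv])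
  qed (use that x E_deriv in auto)
  then have "eventually (\<lambda>t. E x = E t) (at_right 0)"
    using x by (auto simp: eventually_at_right_field intro!: exI[of _ x])
  then have "(E \<longlongrightarrow> E x) (at_right 0)"
    by (rule Lim_transform_eventually[OF tendsto_const])
  moreover have "(E \<longlongrightarrow> D' 0 * (2 + 0)) (at_right 0)"
  proof -
    have "((\<lambda>y. (D y - D 0) / (y - 0)) \<longlongrightarrow> D' 0) (at_right 0)"
      using deriv[of 0] x unfolding has_field_derivative_iff by (auto intro: tendsto_within_subset)
    then have "((\<lambda>y. (D y - D 0) / (y - 0) * (2 + y)) \<longlongrightarrow> D' 0 * (2 + 0)) (at_right 0)"
      by (intro tendsto_mult tendsto_add tendsto_const tendsto_ident_at)
    moreover have "(\<lambda>y. (D y - D 0) / (y - 0) * (2 + y)) = E"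
      by (simp add: E_def D0 fun_eq_iff)
    ultimately show ?thesis
      by simp
  qed
  ultimately have "E x = 0"
    using \<open>D' 0 = 0\<close> tendsto_unique[OF trivial_limit_at_right_real] by fastforce
  then show ?thesis
    using x by (simp add: E_def)
qed (use ode[of 0] assms in simp)

lemma central_pullback_1:
  assumes "0 \<le> x" "x \<le> 1"
  shows "central_pullback 1 x = - (x * ln (1 + x)) / (2 + x)"
proof -
  define K :: "real \<Rightarrow> real" where "K y = - (y * ln (1 + y)) / (2 + y)" for y
  define K' :: "real \<Rightarrow> real" where "K' y = - (2 * ln (1 + y) + y * (2 + y) / (1 + y)) / (2 + y)\<^sup>2" for y
  define G' where "G' y = (\<Sum>n. diffs (central_coeff 1) n * central_arg y ^ n)
      * (- (y * (2 + y)) / (1 + y)\<^sup>2)" for y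
  have K_deriv: "(K has_field_derivative K' y) (at y)" if "0 \<le> y" for y
    unfolding K_def[abs_def] K'_def using that
    by (auto intro!: derivative_eq_intros simp: power2_eq_square divide_simps) (simp add: algebra_simps)
  have K_ode: "y * (2 + y) * K' y = 2 * K y + central_arg y" if "0 \<le> y" for y
    unfolding K_def K'_def central_arg_def using that
    by (simp add: power2_eq_square divide_simps) (simp add: algebra_simps)
  have G_ode: "y * (2 + y) * G' y = 2 * central_pullback 1 y + central_arg y"
    if "0 \<le> y" "y \<le> 1" for y
  proof -
    have "y * (2 + y) * G' y = y * (2 + y) * (- (y * (2 + y)) / (1 + y)\<^sup>2)
        * (\<Sum>n. diffs (central_coeff 1) n * central_arg y ^ n)"
      by (simp add: G'_def)
    also have "y * (2 + y) * (- (y * (2 + y)) / (1 + y)\<^sup>2) = 4 * central_arg y - (central_arg y)\<^sup>2"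
      unfolding central_arg_def using that
      by (simp add: power2_eq_square divide_simps) (simp add: algebra_simps)
    also have "\<dots> * (\<Sum>n. diffs (central_coeff 1) n * central_arg y ^ n) = 2 * central_pullback 1 y + central_arg y"
      unfolding central_pullback_def by (rule central_series_1_ode[OF abs_central_arg_less_1[OF that]])
    finally show ?thesis .
  qed
  have "central_pullback 1 x - K x = 0"
  proof (rule ode_solution_vanishes[where D = "\<lambda>y. central_pullback 1 y - K y"
      and D' = "\<lambda>y. G' y - K' y" and b = 1])
    fix y :: real
    assume "0 \<le> y" "y \<le> 1"
    then show "((\<lambda>y. central_pullback 1 y - K y) has_field_derivative G' y - K' y) (at y)"
      unfolding G'_def by (intro DERIV_diff DERIV_central_pullback K_deriv)
    show "y * (2 + y) * (G' y - K' y) = 2 * (central_pullback 1 y - K y)"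
      using G_ode K_ode \<open>0 \<le> y\<close> \<open>y \<le> 1\<close> by (simp add: algebra_simps)
  qed (use assms in \<open>simp_all add: G'_def K'_def\<close>)
  then show ?thesis
    by (simp add: K_def)
qed

lemma central_pullback_Suc_eqI:
  assumes "s \<ge> 1" "continuous_on {0..<1} F" "F 0 = 0"
    and "\<And>y. 0 < y \<Longrightarrow> y < 1 \<Longrightarrow> DERIV F y :> (2 / y - 1 / (1 + y)) * central_pullback s y"
    and "0 \<le> x" "x < 1"
  shows "central_pullback (Suc s) x = F x"
proof (rule same_DERIV_imp_eq[where a = 0 and b = x and f = "central_pullback (Suc s)" and g = F
      and d = "\<lambda>y. (2 / y - 1 / (1 + y)) * central_pullback s y"])
  show "continuous_on {0..x} (central_pullback (Suc s))"
    using assms(6) by (intro continuous_at_imp_continuous_on) (auto intro: isCont_central_pullback)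
  show "continuous_on {0..x} F"
    by (rule continuous_on_subset[OF assms(2)]) (use assms(6) in auto)
qed (use assms DERIV_central_pullback_Suc central_pullback_0 in auto)

text \<open>For \<open>s \<ge> 2\<close>, \<open>central_expansion s\<close> expands \<open>central_pullback s\<close> on \<open>[0, 1)\<close>; for \<open>s = 1\<close>
  it only has the right value at \<open>x = 1\<close>.\<close>

fun central_expansion :: "nat \<Rightarrow> mpl_comb" where
  "central_expansion 0 = []"
| "central_expansion (Suc 0) = [(1/3, [(1, -1)])]"
| "central_expansion (Suc (Suc 0)) = [(-1, cons_neg_one [(1, -1)])]"
| "central_expansion (Suc (Suc (Suc s))) = comb_step (central_expansion (Suc (Suc s)))"

lemma admissible_comb_central_expansion: "s \<ge> 1 \<Longrightarrow> admissible_comb s (central_expansion s)"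
  by (induction s rule: central_expansion.induct)
    (auto simp: admissible_index_def numeral_2_eq_2 admissible_comb_comb_step)

lemma signed_central_expansion: "\<forall>(q, w)\<in>set (central_expansion s). signed_index w"
  using admissible_comb_central_expansion[of s]
  by (cases "s = 0") (auto simp: admissible_comb_def admissible_index_def)

lemma DERIV_comb_series_central_expansion_2:
  assumes "0 < y" "y < 1"
  shows "DERIV (comb_series (central_expansion 2)) y :> (2 / y - 1 / (1 + y)) * central_pullback 1 y"
proof -
  have "DERIV (comb_series (central_expansion 2)) y :> - (- mpl_series [(1, -1)] y / (1 + y))"
    using assms DERIV_mpl_series_cons_neg_one[of "[(1, -1)]" y]
    by (auto simp: numeral_2_eq_2 intro!: derivative_eq_intros)
  moreover have "- (- mpl_series [(1, -1)] y / (1 + y)) = (2 / y - 1 / (1 + y)) * central_pullback 1 y"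
    using assms mpl_series_neg_one[of y] central_pullback_1[of y]
    by (simp add: divide_simps) (simp add: algebra_simps)
  ultimately show ?thesis
    by simp
qed

lemma central_pullback_eq_comb_series:
  assumes "s \<ge> 2" "0 \<le> x" "x < 1"
  shows "central_pullback s x = comb_series (central_expansion s) x"
  using assms
proof (induction s arbitrary: x rule: nat_induct_at_least)
  case base
  have "central_pullback (Suc 1) x = comb_series (central_expansion 2) x"
  proof (intro central_pullback_Suc_eqI)
    show "continuous_on {0..<1} (comb_series (central_expansion 2))"
      by (intro continuous_at_imp_continuous_on ballI isCont_comb_series) (auto simp: numeral_2_eq_2)
    show "comb_series (central_expansion 2) 0 = 0"
      by (intro comb_series_0) (auto simp: numeral_2_eq_2)
  qed (use base DERIV_comb_series_central_expansion_2 in auto)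
  then show ?case
    by (simp add: numeral_2_eq_2)
next
  case (Suc s)
  have expansion: "central_expansion (Suc s) = comb_step (central_expansion s)"
    using Suc.hyps by (cases s rule: central_expansion.cases) auto
  show ?case
  proof (rule central_pullback_Suc_eqI)
    show "continuous_on {0..<1} (comb_series (central_expansion (Suc s)))"
      by (intro continuous_at_imp_continuous_on ballI isCont_comb_series signed_central_expansion) auto
    show "comb_series (central_expansion (Suc s)) 0 = 0"
      by (rule comb_series_0[OF signed_central_expansion])
    fix y :: real
    assume y: "0 < y" "y < 1"
    have "DERIV (comb_series (central_expansion (Suc s))) y :>
        (2 / y - 1 / (1 + y)) * comb_series (central_expansion s) y"
      unfolding expansion by (rule DERIV_comb_series_comb_step[OF signed_central_expansion y])
    then show "DERIV (comb_series (central_expansion (Suc s))) y :>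
        (2 / y - 1 / (1 + y)) * central_pullback s y"
      using Suc.IH[of y] y by simp
  qed (use Suc in auto)
qed

lemma MPL_term_neg_one_sums: "MPL_term [(1, -1)] sums - ln 2"
proof -
  have "(\<lambda>k. - ((-1) ^ k / real (Suc k))) sums - ln 2"
    by (rule sums_minus[OF alternating_harmonic_series_sums])
  then have "(\<lambda>k. MPL_term [(1, -1)] (Suc k)) sums - ln 2"
    by simp
  then show ?thesis
    by (subst (asm) sums_Suc_iff) simp
qed

lemma central_pullback_at_1:
  assumes "s \<ge> 1"
  shows "central_pullback s 1 = comb_value (central_expansion s)"
proof (cases "s = 1")
  case True
  then show ?thesis
    using central_pullback_1[of 1] sums_unique[OF MPL_term_neg_one_sums] by (simp add: of_rat_divide)
next
  case False
  show ?thesis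
  proof (rule isCont_eq_tendsto_at_left[where f = "central_pullback s" and b = 1])
    show "isCont (central_pullback s) 1"
      by (rule isCont_central_pullback) simp_all
    show "(comb_series (central_expansion s) \<longlongrightarrow> comb_value (central_expansion s)) (at_left 1)"
      by (rule tendsto_comb_series_at_left_1[OF admissible_comb_central_expansion[OF assms]])
    show "eventually (\<lambda>x. central_pullback s x = comb_series (central_expansion s) x) (at_left 1)"
      using assms False eventually_at_left_real[of 0 1]
      by (auto elim!: eventually_mono intro: central_pullback_eq_comb_series)
  qed
qed

lemma series_eq_central_series_neg_half:
  assumes "s \<ge> 1"
  shows "(\<Sum>n. (-1) ^ (n + 1) / (real (n + 1) ^ s * 2 ^ (n + 1) * real ((2 * (n + 1)) choose (n + 1))))
    = central_series s (- 1 / 2)"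
proof -
  have "(\<lambda>n. central_coeff s n * (- 1 / 2) ^ n) sums central_series s (- 1 / 2)"
    unfolding central_series_def by (intro summable_sums summable_central_series) simp
  then have "(\<lambda>n. central_coeff s (Suc n) * (- 1 / 2) ^ Suc n) sums central_series s (- 1 / 2)"
    using central_coeff_0[OF assms] by (subst sums_Suc_iff) simp
  moreover have "1 / (A * B) * (- 1 / 2) ^ Suc n = (-1) ^ (n + 1) / (A * 2 ^ (n + 1) * B)"
    for A B :: real and n
    unfolding power_divide by (simp add: ac_simps)
  then have "central_coeff s (Suc n) * (- 1 / 2) ^ Suc n
      = (-1) ^ (n + 1) / (real (n + 1) ^ s * 2 ^ (n + 1) * real ((2 * (n + 1)) choose (n + 1)))" for n
    unfolding central_coeff_def Suc_eq_plus1 .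
  ultimately have "(\<lambda>n. (-1) ^ (n + 1) / (real (n + 1) ^ s * 2 ^ (n + 1) * real ((2 * (n + 1)) choose (n + 1))))
      sums central_series s (- 1 / 2)"
    by (simp only:)
  then show ?thesis
    by (rule sums_unique[symmetric])
qed

theorem theorem4p18:
  fixes s :: nat
  assumes "s \<ge> 1"
  shows "complex_of_real
           (\<Sum>n. (-1) ^ (n + 1) /
               (real (n + 1) ^ s * 2 ^ (n + 1) * real ((2 * (n + 1)) choose (n + 1))))
         \<in> CMZV 2 s"
proof -
  have "central_pullback s 1 = central_series s (- 1 / 2)"
    by (simp add: central_pullback_def central_arg_def)
  then show ?thesis
    using series_eq_central_series_neg_half[OF assms] central_pullback_at_1[OF assms]
      comb_value_in_CMZV[OF admissible_comb_central_expansion[OF assms]]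
    by simp
qed

end
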